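(* Let $p\ge1$, let $\mathbf Z\sim\mathcal N(\mathbf 0,\mathbf I_p)$, let $V>0$ be a random variable, and let $\mathbf X$ be a random vector in $\mathbb R^p$ with an arbitrary distribution $P_{\mathbf X}$, where $\mathbf X$, $V$, $\mathbf Z$ are mutually independent. Put $\mathbf N=\sqrt V\,\mathbf Z$ and $\mathbf Y=\mathbf X+\mathbf N$. Then $$0\le I(\mathbf X;\mathbf Y\mid V)-I(\mathbf X;\mathbf Y)\le I(V;\sqrt V\,\mathbf Z).$$
   Context: $I(\cdot;\cdot)$ and $I(\cdot;\cdot\mid\cdot)$ denote mutual information and conditional mutual information. *)

theory Defs
  imports "HOL-Probability.Probability"
begin

text \<open>Mutual information (natural logarithm), valued in the extended reals:
  the Kullback--Leibler divergence of the joint law from the product of the marginals,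
  which is +infinity when the joint law is not absolutely continuous w.r.t. the product
  of the marginals or when the log-density is not integrable (its negative part is always
  integrable, so non-integrability means the divergence is +infinity).\<close>
definition MI :: "'a measure \<Rightarrow> 'b measure \<Rightarrow> 'c measure \<Rightarrow> ('a \<Rightarrow> 'b) \<Rightarrow> ('a \<Rightarrow> 'c) \<Rightarrow> ereal" where
  "MI M S T X Y =
    (let P = distr M S X \<Otimes>\<^sub>M distr M T Y;
         Q = distr M (S \<Otimes>\<^sub>M T) (\<lambda>x. (X x, Y x))
     in if absolutely_continuous P Q \<and> integrable Q (entropy_density (exp 1) P Q)
        then ereal (KL_divergence (exp 1) P Q) else \<infinity>)"

definition CMI :: "'a measure \<Rightarrow> 'b measure \<Rightarrow> 'c measure \<Rightarrow> 'd measure \<Rightarrow>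
    ('a \<Rightarrow> 'b) \<Rightarrow> ('a \<Rightarrow> 'c) \<Rightarrow> ('a \<Rightarrow> 'd) \<Rightarrow> ereal" where
  "CMI M S T U X Y Z = MI M S (T \<Otimes>\<^sub>M U) X (\<lambda>x. (Y x, Z x)) - MI M S U X Z"

definition std_gauss_density :: "real^'p \<Rightarrow> ennreal" where
  "std_gauss_density z = ennreal ((2 * pi) powr (- real CARD('p) / 2) * exp (- (norm z)\<^sup>2 / 2))"

definition indep3 :: "'a measure \<Rightarrow> 'b measure \<Rightarrow> ('a \<Rightarrow> 'b) \<Rightarrow> 'c measure \<Rightarrow> ('a \<Rightarrow> 'c)
    \<Rightarrow> 'd measure \<Rightarrow> ('a \<Rightarrow> 'd) \<Rightarrow> bool" where
  "indep3 M SX X SV V SZ Z \<longleftrightarrow>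
    X \<in> measurable M SX \<and> V \<in> measurable M SV \<and> Z \<in> measurable M SZ \<and>
    prob_space.indep_sets M
      (\<lambda>i::nat. if i = 0 then sigma_sets (space M) {X -` A \<inter> space M | A. A \<in> sets SX}
                else if i = 1 then sigma_sets (space M) {V -` A \<inter> space M | A. A \<in> sets SV}
                else sigma_sets (space M) {Z -` A \<inter> space M | A. A \<in> sets SZ})
      {0, 1, 2}"

end

theory Submission
  imports Defs
begin

(* Let g, p and q_v be the Lebesgue densities of the noise N, of the output Y, and of Y given V = v;
   all three are Gaussian mixtures and hence positive.  Every mutual information in the statement is
   then the expectation of an information density (a log-likelihood ratio), e.g. I(X;Y) = E i(X;Y)
   with i(X;Y) = ln (g(N) / p(Y)), and I(X;Y|V) = I(X;Y,V) since X and V are independent.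
   Both inequalities follow from t <= exp t - 1, which also takes care of integrability: the lower
   bound because E exp(i(X;Y) - i(X;Y,V)) <= 1, the upper bound because of the pointwise chain rule
   i(X;Y,V) = i(X;Y) + i(V;N) - i(V;Y) together with E exp(-i(V;Y)) <= 1. *)

(* Non-integrable functions get the value \<infinity>.  This is their extended expectation whenever the
   negative part is integrable, as it is for the information densities below. *)
definition ereal_integral :: "'a measure \<Rightarrow> ('a \<Rightarrow> real) \<Rightarrow> ereal" where
  "ereal_integral M f = (if integrable M f then ereal (integral\<^sup>L M f) else \<infinity>)"

lemma ereal_integral_add_le:
  "ereal_integral M (\<lambda>x. f x + g x) \<le> ereal_integral M f + ereal_integral M g"
  by (simp add: ereal_integral_def)

lemma (in prob_space) integrable_of_nn_integral_le_1:
  fixes h :: "'a \<Rightarrow> real"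
  assumes [measurable]: "h \<in> borel_measurable M" and nonneg: "\<And>x. 0 \<le> h x"
    and le_1: "(\<integral>\<^sup>+x. ennreal (h x) \<partial>M) \<le> 1"
  shows "integrable M h" and "integral\<^sup>L M h \<le> 1"
proof -
  show h: "integrable M h"
    using le_1 by (intro integrableI_nonneg) (auto simp: nonneg top.not_eq_extremum le_less_trans)
  have "ennreal (integral\<^sup>L M h) = (\<integral>\<^sup>+x. ennreal (h x) \<partial>M)"
    using h nonneg by (intro nn_integral_eq_integral[symmetric]) auto
  with le_1 show "integral\<^sup>L M h \<le> 1"
    by (metis ennreal_le_1)
qed

lemma (in prob_space) ereal_integral_mono_exp:
  fixes f g :: "'a \<Rightarrow> real"
  assumes [measurable]: "f \<in> borel_measurable M" "g \<in> borel_measurable M"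
    and exp_diff: "(\<integral>\<^sup>+x. ennreal (exp (f x - g x)) \<partial>M) \<le> 1"
    and exp_neg: "(\<integral>\<^sup>+x. ennreal (exp (- f x)) \<partial>M) \<le> 1"
  shows "ereal_integral M f \<le> ereal_integral M g"
proof (cases "integrable M g")
  case False
  then show ?thesis by (simp add: ereal_integral_def)
next
  case g: True
  note exp_diff_int = integrable_of_nn_integral_le_1[OF _ _ exp_diff]
  note exp_neg_int = integrable_of_nn_integral_le_1[OF _ _ exp_neg]
  have upper: "f x \<le> g x + (exp (f x - g x) - 1)" for x
    using exp_ge_add_one_self[of "f x - g x"] by linarith
  have lower: "- f x \<le> exp (- f x) - 1" for x
    using exp_ge_add_one_self[of "- f x"] by linarith
  have f: "integrable M f"
  proof (rule Bochner_Integration.integrable_bound)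
    show "integrable M (\<lambda>x. \<bar>g x\<bar> + exp (f x - g x) + exp (- f x))"
      using g exp_diff_int exp_neg_int by auto
    show "AE x in M. norm (f x) \<le> norm (\<bar>g x\<bar> + exp (f x - g x) + exp (- f x))"
      using upper lower exp_gt_zero by (intro AE_I2) (smt (verit) real_norm_def)
  qed simp
  have "integral\<^sup>L M f \<le> (\<integral>x. g x + (exp (f x - g x) - 1) \<partial>M)"
    using g exp_diff_int by (intro integral_mono f upper) auto
  also have "\<dots> = integral\<^sup>L M g + ((\<integral>x. exp (f x - g x) \<partial>M) - 1)"
    using g exp_diff_int by (simp add: prob_space)
  also have "\<dots> \<le> integral\<^sup>L M g"
    using exp_diff_int by simp
  finally show ?thesis
    using f g by (simp add: ereal_integral_def)
qed

lemma ennreal_mult_divide_le: "(a::ennreal) * (b / a) \<le> b"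
proof (cases "a = 0 \<or> a = \<top>")
  case True
  then show ?thesis
    by (auto simp: ennreal_times_divide ennreal_top_divide top_unique)
next
  case False
  then show ?thesis
    using mult_divide_eq_ennreal[of a b] by (simp add: ennreal_times_divide mult.commute)
qed

lemma ennreal_exp_neg_ln_divide_le:
  fixes a b :: ennreal
  assumes "0 < b" and "a < \<top>"
  shows "ennreal (exp (- ln (enn2real (a / b)))) \<le> b / a"
proof (cases "a = 0 \<or> b = \<top>")
  case True
  then show ?thesis
    using assms by (auto simp: ennreal_top_divide)
next
  case False
  with assms obtain a' b' where "a = ennreal a'" "b = ennreal b'" "0 < a'" "0 < b'"
    by (cases a rule: ennreal_cases; cases b rule: ennreal_cases) auto
  then show ?thesis
    by (simp add: divide_ennreal ln_div exp_diff)
qed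

lemma ln_enn2real_divide:
  fixes a b :: ennreal
  assumes "0 < a" "a < \<top>" "0 < b" "b < \<top>"
  shows "ln (enn2real (a / b)) = ln (enn2real a) - ln (enn2real b)"
proof -
  obtain a' b' where "a = ennreal a'" "b = ennreal b'" "0 < a'" "0 < b'"
    using assms by (cases a rule: ennreal_cases; cases b rule: ennreal_cases) auto
  then show ?thesis
    by (simp add: divide_ennreal ln_div)
qed

lemma ennreal_exp_diff_ln_divide:
  fixes a b c d :: ennreal
  assumes "0 < a" "a < \<top>" "0 < b" "b < \<top>" "0 < c" "c < \<top>" "0 < d" "d < \<top>"
  shows "ennreal (exp (ln (enn2real (a / b)) - ln (enn2real (c / d)))) = a / b * (d / c)"
proof -
  obtain a' b' c' d' where "a = ennreal a'" "b = ennreal b'" "c = ennreal c'" "d = ennreal d'"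
    and "0 < a'" "0 < b'" "0 < c'" "0 < d'"
    using assms by (cases a rule: ennreal_cases; cases b rule: ennreal_cases;
        cases c rule: ennreal_cases; cases d rule: ennreal_cases) auto
  then show ?thesis
    by (simp add: divide_ennreal ln_div exp_diff ennreal_mult[symmetric])
qed

lemma (in prob_space) nn_integral_pos:
  assumes [measurable]: "f \<in> borel_measurable M" and pos: "AE x in M. 0 < f x"
  shows "0 < (\<integral>\<^sup>+x. f x \<partial>M)"
proof (rule ccontr)
  assume "\<not> 0 < (\<integral>\<^sup>+x. f x \<partial>M)"
  then have "AE x in M. f x = 0"
    by (simp add: nn_integral_0_iff_AE)
  with pos have "AE x in M. False"
    by eventually_elim simp
  then show False
    by simp
qed

lemma AE_finite_of_prob_space_density:
  assumes "prob_space (density R f)" and "f \<in> borel_measurable R"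
  shows "AE z in R. f z \<noteq> \<infinity>"
proof (rule nn_integral_PInf_AE)
  have "(\<integral>\<^sup>+z. f z \<partial>R) = emeasure (density R f) (space R)"
    using assms(2) by (simp add: emeasure_density)
  then show "(\<integral>\<^sup>+z. f z \<partial>R) \<noteq> \<infinity>"
    using prob_space.emeasure_space_1[OF assms(1)] by simp
qed fact

lemma (in prob_space) AE_less_top_of_distr_eq_density:
  assumes [measurable]: "F \<in> measurable M N" and sets_R: "sets R = sets N"
    and f [measurable]: "f \<in> borel_measurable R" and distr_F: "distr M N F = density R f"
  shows "AE \<omega> in M. f (F \<omega>) < \<top>"
proof -
  have [measurable]: "f \<in> borel_measurable N"
    using f by (simp add: measurable_cong_sets[OF sets_R refl])
  have "prob_space (density R f)"
    unfolding distr_F[symmetric] by (rule prob_space_distr) simp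
  from AE_finite_of_prob_space_density[OF this f] have "AE z in density R f. f z \<noteq> \<infinity>"
    by (subst AE_density) (auto elim: eventually_mono)
  then show ?thesis
    unfolding distr_F[symmetric] by (subst (asm) AE_distr_iff) (simp_all add: top.not_eq_extremum)
qed

lemma nn_integral_density_ratio_le_1:
  assumes [measurable]: "F \<in> measurable M N" and sets_R: "sets R = sets N"
    and f [measurable]: "f \<in> borel_measurable R" and g [measurable]: "g \<in> borel_measurable R"
    and distr_F: "distr M N F = density R f" and prob_g: "prob_space (density R g)"
  shows "(\<integral>\<^sup>+\<omega>. g (F \<omega>) / f (F \<omega>) \<partial>M) \<le> 1"
proof -
  have [measurable]: "f \<in> borel_measurable N" "g \<in> borel_measurable N"
    using f g by (simp_all add: measurable_cong_sets[OF sets_R refl])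
  have "(\<integral>\<^sup>+\<omega>. g (F \<omega>) / f (F \<omega>) \<partial>M) = (\<integral>\<^sup>+z. g z / f z \<partial>distr M N F)"
    by (simp add: nn_integral_distr)
  also have "\<dots> = (\<integral>\<^sup>+z. f z * (g z / f z) \<partial>R)"
    unfolding distr_F by (intro nn_integral_density) measurable
  also have "\<dots> \<le> (\<integral>\<^sup>+z. g z \<partial>R)"
    by (intro nn_integral_mono ennreal_mult_divide_le)
  also have "\<dots> = emeasure (density R g) (space R)"
    using g by (simp add: emeasure_density)
  also have "\<dots> = 1"
    using prob_space.emeasure_space_1[OF prob_g] by simp
  finally show ?thesis .
qed

lemma pair_measure_density_right:
  assumes "sigma_finite_measure B" "sigma_finite_measure (density B g)" "g \<in> borel_measurable B"
  shows "A \<Otimes>\<^sub>M density B g = density (A \<Otimes>\<^sub>M B) (\<lambda>(a, b). g b)"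
  using pair_measure_density[of "\<lambda>_. 1" A g B] assms by (simp add: density_1)

lemma pair_measure_density_left:
  assumes "sigma_finite_measure B" "f \<in> borel_measurable A"
  shows "density A f \<Otimes>\<^sub>M B = density (A \<Otimes>\<^sub>M B) (\<lambda>(a, b). f a)"
  using pair_measure_density[of f A "\<lambda>_. 1" B] assms by (simp add: density_1)

lemma distr_density_pair_snd:
  assumes "sigma_finite_measure A" "sigma_finite_measure B"
    and [measurable]: "f \<in> borel_measurable (A \<Otimes>\<^sub>M B)"
  shows "distr (density (A \<Otimes>\<^sub>M B) f) B snd = density B (\<lambda>b. \<integral>\<^sup>+a. f (a, b) \<partial>A)"
proof (rule measure_eqI)
  interpret A: sigma_finite_measure A by fact
  interpret B: sigma_finite_measure B by fact
  interpret pair_sigma_finite A B ..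
  have [measurable]: "(\<lambda>b. \<integral>\<^sup>+a. f (a, b) \<partial>A) \<in> borel_measurable B"
    by measurable
  fix S assume "S \<in> sets (distr (density (A \<Otimes>\<^sub>M B) f) B snd)"
  then have [measurable]: "S \<in> sets B" by simp
  have "emeasure (distr (density (A \<Otimes>\<^sub>M B) f) B snd) S = (\<integral>\<^sup>+z. f z * indicator S (snd z) \<partial>(A \<Otimes>\<^sub>M B))"
    by (auto simp: emeasure_distr emeasure_density intro!: nn_integral_cong split: split_indicator)
  also have "\<dots> = (\<integral>\<^sup>+b. \<integral>\<^sup>+a. f (a, b) * indicator S b \<partial>A \<partial>B)"
    using nn_integral_snd[of "\<lambda>z. f z * indicator S (snd z)"] by simp
  also have "\<dots> = (\<integral>\<^sup>+b. (\<integral>\<^sup>+a. f (a, b) \<partial>A) * indicator S b \<partial>B)"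
    by (intro nn_integral_cong nn_integral_multc) measurable
  also have "\<dots> = emeasure (density B (\<lambda>b. \<integral>\<^sup>+a. f (a, b) \<partial>A)) S"
    by (simp add: emeasure_density)
  finally show "emeasure (distr (density (A \<Otimes>\<^sub>M B) f) B snd) S
      = emeasure (density B (\<lambda>b. \<integral>\<^sup>+a. f (a, b) \<partial>A)) S" .
qed simp

lemma distr_eq_density_pair_measureI:
  assumes [measurable]: "F \<in> measurable M (S \<Otimes>\<^sub>M T)"
    and sets_A: "sets A = sets S" and sets_B: "sets B = sets T" and "sigma_finite_measure B"
    and [measurable]: "f \<in> borel_measurable (S \<Otimes>\<^sub>M T)"
    and law: "\<And>D. D \<in> sets (S \<Otimes>\<^sub>M T) \<Longrightarrow>
      (\<integral>\<^sup>+\<omega>. indicator D (F \<omega>) \<partial>M) = (\<integral>\<^sup>+a. \<integral>\<^sup>+b. f (a, b) * indicator D (a, b) \<partial>B \<partial>A)"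
  shows "distr M (S \<Otimes>\<^sub>M T) F = density (A \<Otimes>\<^sub>M B) f"
proof (rule measure_eqI)
  interpret B: sigma_finite_measure B by fact
  have sets_AB: "sets (A \<Otimes>\<^sub>M B) = sets (S \<Otimes>\<^sub>M T)"
    using sets_A sets_B by (rule sets_pair_measure_cong)
  then show "sets (distr M (S \<Otimes>\<^sub>M T) F) = sets (density (A \<Otimes>\<^sub>M B) f)"
    by simp
  fix D assume "D \<in> sets (distr M (S \<Otimes>\<^sub>M T) F)"
  then have D [measurable]: "D \<in> sets (S \<Otimes>\<^sub>M T)" by simp
  have [measurable]: "f \<in> borel_measurable (A \<Otimes>\<^sub>M B)" "D \<in> sets (A \<Otimes>\<^sub>M B)"
    using sets_AB by (simp_all add: measurable_cong_sets[OF sets_AB refl])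
  have "emeasure (distr M (S \<Otimes>\<^sub>M T) F) D = (\<integral>\<^sup>+z. indicator D z \<partial>distr M (S \<Otimes>\<^sub>M T) F)"
    by simp
  also have "\<dots> = (\<integral>\<^sup>+\<omega>. indicator D (F \<omega>) \<partial>M)"
    by (rule nn_integral_distr) measurable
  also have "\<dots> = (\<integral>\<^sup>+z. f z * indicator D z \<partial>(A \<Otimes>\<^sub>M B))"
    unfolding law[OF D] by (rule B.nn_integral_fst) measurable
  also have "\<dots> = emeasure (density (A \<Otimes>\<^sub>M B) f) D"
    by (simp add: emeasure_density)
  finally show "emeasure (distr M (S \<Otimes>\<^sub>M T) F) D = emeasure (density (A \<Otimes>\<^sub>M B) f) D" .
qed

lemma (in prob_space) distr_pair_eq_of_indep_sets:
  assumes indep: "indep_sets F I" and ij: "i \<in> I" "j \<in> I" "i \<noteq> j"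
    and [measurable]: "A \<in> measurable M SA" "B \<in> measurable M SB"
    and A_F: "\<And>S. S \<in> sets SA \<Longrightarrow> A -` S \<inter> space M \<in> F i"
    and B_F: "\<And>S. S \<in> sets SB \<Longrightarrow> B -` S \<inter> space M \<in> F j"
  shows "distr M (SA \<Otimes>\<^sub>M SB) (\<lambda>\<omega>. (A \<omega>, B \<omega>)) = distr M SA A \<Otimes>\<^sub>M distr M SB B"
proof (rule pair_measure_eqI[symmetric])
  interpret A: prob_space "distr M SA A" by (rule prob_space_distr) simp
  interpret B: prob_space "distr M SB B" by (rule prob_space_distr) simp
  show "sigma_finite_measure (distr M SA A)" "sigma_finite_measure (distr M SB B)"
    by unfold_locales
  show "sets (distr M SA A \<Otimes>\<^sub>M distr M SB B) = sets (distr M (SA \<Otimes>\<^sub>M SB) (\<lambda>\<omega>. (A \<omega>, B \<omega>)))"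
    by (simp cong: sets_pair_measure_cong)
  fix S T assume "S \<in> sets (distr M SA A)" and "T \<in> sets (distr M SB B)"
  then have S: "S \<in> sets SA" and T: "T \<in> sets SB" by auto
  let ?E = "\<lambda>k. if k = i then A -` S \<inter> space M else B -` T \<inter> space M"
  have "prob (\<Inter>k\<in>{i, j}. ?E k) = (\<Prod>k\<in>{i, j}. prob (?E k))"
    using ij A_F[OF S] B_F[OF T] by (intro indep_setsD[OF indep]) auto
  moreover have "(\<lambda>\<omega>. (A \<omega>, B \<omega>)) -` (S \<times> T) \<inter> space M = (\<Inter>k\<in>{i, j}. ?E k)"
    using ij by auto
  ultimately have "prob ((\<lambda>\<omega>. (A \<omega>, B \<omega>)) -` (S \<times> T) \<inter> space M)
      = prob (A -` S \<inter> space M) * prob (B -` T \<inter> space M)"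
    using ij by simp
  then show "emeasure (distr M SA A) S * emeasure (distr M SB B) T
      = emeasure (distr M (SA \<Otimes>\<^sub>M SB) (\<lambda>\<omega>. (A \<omega>, B \<omega>))) (S \<times> T)"
    using S T by (simp add: emeasure_distr emeasure_eq_measure ennreal_mult)
qed

lemma vimage_pair_in_sigma_sets:
  assumes [measurable]: "A \<in> measurable M SA" "B \<in> measurable M SB" and G: "G \<subseteq> Pow (space M)"
    and A_G: "\<And>S. S \<in> sets SA \<Longrightarrow> A -` S \<inter> space M \<in> G"
    and B_G: "\<And>S. S \<in> sets SB \<Longrightarrow> B -` S \<inter> space M \<in> G"
    and D: "D \<in> sets (SA \<Otimes>\<^sub>M SB)"
  shows "(\<lambda>\<omega>. (A \<omega>, B \<omega>)) -` D \<inter> space M \<in> sigma_sets (space M) G"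
proof -
  define M' where "M' = sigma (space M) G"
  have sets_M': "sets M' = sigma_sets (space M) G" and space_M': "space M' = space M"
    using G by (simp_all add: M'_def)
  have "A \<in> measurable M' SA" "B \<in> measurable M' SB"
    using A_G B_G measurable_space[of A M SA] measurable_space[of B M SB]
    by (auto intro!: measurableI simp: sets_M' space_M')
  then have "(\<lambda>\<omega>. (A \<omega>, B \<omega>)) \<in> measurable M' (SA \<Otimes>\<^sub>M SB)"
    by (rule measurable_Pair)
  from measurable_sets[OF this D] show ?thesis
    by (simp add: sets_M' space_M')
qed

section \<open>Information densities\<close>

locale joint_product_densities = prob_space +
  fixes S :: "'b measure" and T :: "'c measure" and X :: "'a \<Rightarrow> 'b" and Y :: "'a \<Rightarrow> 'c"
    and R :: "('b \<times> 'c) measure" and f_joint f_prod :: "'b \<times> 'c \<Rightarrow> ennreal"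
  assumes X [measurable]: "X \<in> measurable M S" and Y [measurable]: "Y \<in> measurable M T"
    and sets_R: "sets R = sets (S \<Otimes>\<^sub>M T)"
    and f_joint [measurable]: "f_joint \<in> borel_measurable R"
    and f_prod [measurable]: "f_prod \<in> borel_measurable R"
    and distr_joint: "distr M (S \<Otimes>\<^sub>M T) (\<lambda>\<omega>. (X \<omega>, Y \<omega>)) = density R f_joint"
    and distr_prod: "distr M S X \<Otimes>\<^sub>M distr M T Y = density R f_prod"
    and f_prod_pos: "AE \<omega> in M. 0 < f_prod (X \<omega>, Y \<omega>)"
begin

definition information_density :: "'a \<Rightarrow> real" where
  "information_density \<omega> = ln (enn2real (f_joint (X \<omega>, Y \<omega>) / f_prod (X \<omega>, Y \<omega>)))"

lemma f_joint_measurable [measurable]: "f_joint \<in> borel_measurable (S \<Otimes>\<^sub>M T)"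
  and f_prod_measurable [measurable]: "f_prod \<in> borel_measurable (S \<Otimes>\<^sub>M T)"
  using f_joint f_prod by (simp_all add: measurable_cong_sets[OF sets_R refl])

lemma information_density_measurable [measurable]: "information_density \<in> borel_measurable M"
  unfolding information_density_def[abs_def] by measurable

lemma prob_space_density_prod: "prob_space (density R f_prod)"
  unfolding distr_prod[symmetric] by (intro prob_space_pair prob_space_distr) simp_all

lemma distr_joint_eq_density_prod:
  "distr M (S \<Otimes>\<^sub>M T) (\<lambda>\<omega>. (X \<omega>, Y \<omega>)) = density (density R f_prod) (\<lambda>z. f_joint z / f_prod z)"
proof -
  have "AE z in density R f_joint. 0 < f_prod z"
    unfolding distr_joint[symmetric] using f_prod_pos by (subst AE_distr_iff) simp_all
  then have pos: "AE z in R. 0 < f_joint z \<longrightarrow> 0 < f_prod z"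
    using f_joint by (simp add: AE_density)
  have "density (density R f_prod) (\<lambda>z. f_joint z / f_prod z)
      = density R (\<lambda>z. f_prod z * (f_joint z / f_prod z))"
    by (intro density_density_eq) measurable
  also have "\<dots> = density R f_joint"
  proof (intro density_cong)
    show "AE z in R. f_prod z * (f_joint z / f_prod z) = f_joint z"
      using pos AE_finite_of_prob_space_density[OF prob_space_density_prod f_prod]
      by eventually_elim
        (auto simp: ennreal_times_divide mult.commute mult_divide_eq_ennreal top.not_eq_extremum)
  qed measurable
  finally show ?thesis
    by (simp add: distr_joint)
qed

lemma MI_eq_ereal_integral: "MI M S T X Y = ereal_integral M information_density"
proof -
  let ?P = "distr M S X \<Otimes>\<^sub>M distr M T Y" and ?Q = "distr M (S \<Otimes>\<^sub>M T) (\<lambda>\<omega>. (X \<omega>, Y \<omega>))"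
  let ?r = "\<lambda>z. f_joint z / f_prod z"
  interpret P: prob_space ?P
    by (intro prob_space_pair prob_space_distr) simp_all
  have sets_P: "sets ?P = sets (S \<Otimes>\<^sub>M T)"
    by (simp cong: sets_pair_measure_cong)
  have r [measurable]: "?r \<in> borel_measurable ?P"
    by (simp add: measurable_cong_sets[OF sets_P refl])
  have Q: "?Q = density ?P ?r"
    unfolding distr_prod by (rule distr_joint_eq_density_prod)
  have "AE z in ?P. ?r z = RN_deriv ?P ?Q z"
    by (rule P.RN_deriv_unique[OF r Q[symmetric]])
  then have entropy_density: "AE z in ?Q. entropy_density (exp 1) ?P ?Q z = ln (enn2real (?r z))"
    unfolding Q by (subst AE_density) (auto simp: entropy_density_def log_def elim!: eventually_mono)
  have [measurable]: "entropy_density (exp 1) ?P ?Q \<in> borel_measurable ?Q"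
    using measurable_entropy_density[of "exp 1" ?P ?Q]
    by (simp add: measurable_cong_sets[OF sets_P refl])
  have "integrable ?Q (entropy_density (exp 1) ?P ?Q) \<longleftrightarrow> integrable ?Q (\<lambda>z. ln (enn2real (?r z)))"
    by (intro integrable_cong_AE entropy_density) measurable
  also have "\<dots> \<longleftrightarrow> integrable M information_density"
    unfolding information_density_def[abs_def] by (intro integrable_distr_eq) measurable
  finally have integrable:
    "integrable ?Q (entropy_density (exp 1) ?P ?Q) \<longleftrightarrow> integrable M information_density" .
  have "KL_divergence (exp 1) ?P ?Q = (\<integral>z. ln (enn2real (?r z)) \<partial>?Q)"
    unfolding KL_divergence_def by (intro integral_cong_AE entropy_density) measurable
  also have "\<dots> = integral\<^sup>L M information_density"
    unfolding information_density_def[abs_def] by (intro integral_distr) measurable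
  finally have "KL_divergence (exp 1) ?P ?Q = integral\<^sup>L M information_density" .
  moreover have "absolutely_continuous ?P ?Q"
    unfolding Q by (intro absolutely_continuousI_density r)
  ultimately show ?thesis
    using integrable by (simp add: MI_def ereal_integral_def)
qed

lemma nn_integral_exp_neg_information_density:
  "(\<integral>\<^sup>+\<omega>. ennreal (exp (- information_density \<omega>)) \<partial>M) \<le> 1"
proof -
  have "AE \<omega> in M. f_joint (X \<omega>, Y \<omega>) < \<top>"
    using sets_R distr_joint by (intro AE_less_top_of_distr_eq_density) simp_all
  then have "(\<integral>\<^sup>+\<omega>. ennreal (exp (- information_density \<omega>)) \<partial>M)
      \<le> (\<integral>\<^sup>+\<omega>. f_prod (X \<omega>, Y \<omega>) / f_joint (X \<omega>, Y \<omega>) \<partial>M)"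
    using f_prod_pos
    by (intro nn_integral_mono_AE) (auto simp: information_density_def ennreal_exp_neg_ln_divide_le)
  also have "\<dots> \<le> 1"
    using sets_R distr_joint prob_space_density_prod by (intro nn_integral_density_ratio_le_1) simp_all
  finally show ?thesis .
qed

end

section \<open>Gaussian densities\<close>

definition gauss_density :: "real \<Rightarrow> real^'p \<Rightarrow> ennreal" where
  "gauss_density v n =
    ennreal ((2 * pi * v) powr (- real CARD('p) / 2) * exp (- (norm n)\<^sup>2 / (2 * v)))"

lemma gauss_density_measurable [measurable]:
  "(\<lambda>(v, n). gauss_density v n) \<in> borel_measurable (borel \<Otimes>\<^sub>M borel)"
  unfolding gauss_density_def by measurable

lemma gauss_density_pos: "0 < v \<Longrightarrow> 0 < gauss_density v n"
  by (simp add: gauss_density_def)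

lemma gauss_density_le:
  "0 < v \<Longrightarrow> gauss_density v n \<le> ennreal ((2 * pi * v) powr (- real CARD('p) / 2))"
  for n :: "real^'p"
  unfolding gauss_density_def by (intro ennreal_leI mult_left_le) auto

lemma gauss_density_less_top: "gauss_density v n < \<top>"
  by (simp add: gauss_density_def)

lemma gauss_density_scaleR:
  fixes z :: "real^'p"
  assumes v: "0 < v"
  shows "ennreal (sqrt v ^ CARD('p)) * gauss_density v (sqrt v *\<^sub>R z) = std_gauss_density z"
proof -
  let ?d = "real CARD('p)"
  have "sqrt v ^ CARD('p) * (2 * pi * v) powr (- ?d / 2)
      = v powr (?d / 2) * ((2 * pi) powr (- ?d / 2) * v powr (- ?d / 2))"
    using v by (simp add: powr_half_sqrt[symmetric] powr_power powr_mult field_simps)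
  also have "\<dots> = (2 * pi) powr (- ?d / 2)"
    using v by (simp add: powr_add[symmetric])
  finally have "sqrt v ^ CARD('p)
      * ((2 * pi * v) powr (- ?d / 2) * exp (- (norm (sqrt v *\<^sub>R z))\<^sup>2 / (2 * v)))
      = (2 * pi) powr (- ?d / 2) * exp (- (norm z)\<^sup>2 / 2)"
    using v by (simp add: power_mult_distrib)
  then show ?thesis
    unfolding gauss_density_def std_gauss_density_def
    using v by (subst ennreal_mult[symmetric]) auto
qed

lemma nn_integral_std_gauss_affine:
  fixes G :: "real^'p \<Rightarrow> ennreal" and x :: "real^'p"
  assumes [measurable]: "G \<in> borel_measurable borel" and v: "0 < v"
  shows "(\<integral>\<^sup>+z. G (x + sqrt v *\<^sub>R z) \<partial>density lborel std_gauss_density)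
       = (\<integral>\<^sup>+y. G y * gauss_density v (y - x) \<partial>lborel)"
proof -
  have [measurable]: "std_gauss_density \<in> borel_measurable (borel :: (real^'p) measure)"
    unfolding std_gauss_density_def by measurable
  have "(\<integral>\<^sup>+y. G y * gauss_density v (y - x) \<partial>lborel)
      = (\<integral>\<^sup>+y. G y * gauss_density v (y - x)
          \<partial>density (distr lborel borel (\<lambda>z. x + sqrt v *\<^sub>R z)) (\<lambda>_. \<bar>sqrt v\<bar> ^ DIM(real^'p)))"
    using v by (subst lborel_affine[of "sqrt v" x]) simp_all
  also have "\<dots> = (\<integral>\<^sup>+z. ennreal (sqrt v ^ CARD('p)) * gauss_density v (sqrt v *\<^sub>R z)
      * G (x + sqrt v *\<^sub>R z) \<partial>lborel)"
    using v by (simp add: nn_integral_density nn_integral_distr mult_ac)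
  also have "\<dots> = (\<integral>\<^sup>+z. G (x + sqrt v *\<^sub>R z) \<partial>density lborel std_gauss_density)"
    using v by (simp add: gauss_density_scaleR nn_integral_density)
  finally show ?thesis ..
qed

section \<open>The Gaussian scale-mixture channel\<close>

locale scale_mixture_channel = prob_space +
  fixes X Z :: "'a \<Rightarrow> real^'p" and V :: "'a \<Rightarrow> real"
  assumes X [measurable]: "X \<in> measurable M borel"
    and V [measurable]: "V \<in> borel_measurable M" and V_pos: "\<forall>\<omega>\<in>space M. V \<omega> > 0"
    and Z_gauss: "distributed M lborel Z std_gauss_density"
    and indep: "indep3 M borel X borel V borel Z"
begin

abbreviation N :: "'a \<Rightarrow> real^'p" where "N \<omega> \<equiv> sqrt (V \<omega>) *\<^sub>R Z \<omega>"
abbreviation Y :: "'a \<Rightarrow> real^'p" where "Y \<omega> \<equiv> X \<omega> + sqrt (V \<omega>) *\<^sub>R Z \<omega>"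

abbreviation "P\<^sub>X \<equiv> distr M borel X"
abbreviation "P\<^sub>V \<equiv> distr M borel V"
abbreviation "P\<^sub>Z \<equiv> distr M borel Z"

lemma Z [measurable]: "Z \<in> borel_measurable M"
  using indep by (simp add: indep3_def)

sublocale P\<^sub>X: prob_space "P\<^sub>X" by (rule prob_space_distr) simp
sublocale P\<^sub>V: prob_space "P\<^sub>V" by (rule prob_space_distr) simp
sublocale P\<^sub>Z: prob_space "P\<^sub>Z" by (rule prob_space_distr) simp

lemma sigma_finite_lborel_P_V: "sigma_finite_measure (lborel \<Otimes>\<^sub>M P\<^sub>V)"
  by (intro sigma_finite_pair_measure) unfold_locales

lemma P_Z_eq: "P\<^sub>Z = density lborel std_gauss_density"
  using Z_gauss by (simp add: distributed_def cong: distr_cong)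

lemma AE_P_V_pos: "AE v in P\<^sub>V. 0 < v"
  using V_pos by (subst AE_distr_iff) auto

definition noise_density :: "real^'p \<Rightarrow> ennreal" where
  "noise_density n = (\<integral>\<^sup>+v. gauss_density v n \<partial>P\<^sub>V)"

definition cond_output_density :: "real \<Rightarrow> real^'p \<Rightarrow> ennreal" where
  "cond_output_density v y = (\<integral>\<^sup>+x. gauss_density v (y - x) \<partial>P\<^sub>X)"

definition output_density :: "real^'p \<Rightarrow> ennreal" where
  "output_density y = (\<integral>\<^sup>+x. noise_density (y - x) \<partial>P\<^sub>X)"

lemma noise_density_measurable [measurable]: "noise_density \<in> borel_measurable borel"
  unfolding noise_density_def[abs_def] by measurable

lemma cond_output_density_measurable [measurable]:
  "(\<lambda>(v, y). cond_output_density v y) \<in> borel_measurable (borel \<Otimes>\<^sub>M borel)"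
  unfolding cond_output_density_def by measurable

lemma output_density_measurable [measurable]: "output_density \<in> borel_measurable borel"
  unfolding output_density_def[abs_def] by measurable

definition events_XVZ :: "nat \<Rightarrow> 'a set set" where
  "events_XVZ i =
    (if i = 0 then sigma_sets (space M) {X -` A \<inter> space M | A. A \<in> sets (borel :: (real^'p) measure)}
     else if i = 1 then sigma_sets (space M) {V -` A \<inter> space M | A. A \<in> sets (borel :: real measure)}
     else sigma_sets (space M) {Z -` A \<inter> space M | A. A \<in> sets (borel :: (real^'p) measure)})"

lemma indep_events_XVZ: "indep_sets events_XVZ {0, 1, 2}"
  using indep unfolding indep3_def events_XVZ_def[abs_def] by simp

lemma events_XVZ_subset: "events_XVZ i \<subseteq> Pow (space M)"
  unfolding events_XVZ_def by (auto dest: sigma_sets_into_sp[rotated])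

lemma distr_X_V: "distr M (borel \<Otimes>\<^sub>M borel) (\<lambda>\<omega>. (X \<omega>, V \<omega>)) = P\<^sub>X \<Otimes>\<^sub>M P\<^sub>V"
  by (rule distr_pair_eq_of_indep_sets[OF indep_events_XVZ, of 0 1])
    (auto simp: events_XVZ_def)

lemma distr_V_Z: "distr M (borel \<Otimes>\<^sub>M borel) (\<lambda>\<omega>. (V \<omega>, Z \<omega>)) = P\<^sub>V \<Otimes>\<^sub>M P\<^sub>Z"
  by (rule distr_pair_eq_of_indep_sets[OF indep_events_XVZ, of 1 2])
    (auto simp: events_XVZ_def)

lemma distr_X_VZ:
  "distr M (borel \<Otimes>\<^sub>M (borel \<Otimes>\<^sub>M borel)) (\<lambda>\<omega>. (X \<omega>, V \<omega>, Z \<omega>)) = P\<^sub>X \<Otimes>\<^sub>M (P\<^sub>V \<Otimes>\<^sub>M P\<^sub>Z)"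
proof -
  define I :: "nat \<Rightarrow> nat set" where "I j = (if j = 0 then {0} else {1, 2})" for j
  have "indep_sets (\<lambda>j. sigma_sets (space M) (\<Union>i\<in>I j. events_XVZ i)) {0, 1}"
  proof (rule indep_sets_collect_sigma)
    show "indep_sets events_XVZ (\<Union>j\<in>{0, 1}. I j)"
      using indep_events_XVZ by (simp add: I_def insert_commute)
    show "Int_stable (events_XVZ i)" for i
      unfolding events_XVZ_def
      by (auto intro!: sigma_algebra_sigma_sets[THEN sigma_algebra.axioms(1), THEN algebra.Int_stable])
    show "disjoint_family_on I {0, 1}"
      by (auto simp: disjoint_family_on_def I_def)
  qed
  then have "distr M (borel \<Otimes>\<^sub>M (borel \<Otimes>\<^sub>M borel)) (\<lambda>\<omega>. (X \<omega>, V \<omega>, Z \<omega>))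
      = P\<^sub>X \<Otimes>\<^sub>M distr M (borel \<Otimes>\<^sub>M borel) (\<lambda>\<omega>. (V \<omega>, Z \<omega>))"
  proof (rule distr_pair_eq_of_indep_sets[of _ _ 0 1])
    show "(\<lambda>\<omega>. (V \<omega>, Z \<omega>)) -` D \<inter> space M \<in> sigma_sets (space M) (\<Union>i\<in>I 1. events_XVZ i)"
      if D: "D \<in> sets (borel \<Otimes>\<^sub>M borel)" for D
    proof (rule vimage_pair_in_sigma_sets[OF V Z _ _ _ D])
      show "(\<Union>i\<in>I 1. events_XVZ i) \<subseteq> Pow (space M)"
        using events_XVZ_subset by blast
      show "V -` S \<inter> space M \<in> (\<Union>i\<in>I 1. events_XVZ i)" if "S \<in> sets borel" for S
        using that by (auto simp: I_def events_XVZ_def intro!: bexI[of _ 1])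
      show "Z -` S \<inter> space M \<in> (\<Union>i\<in>I 1. events_XVZ i)" if "S \<in> sets borel" for S
        using that by (auto simp: I_def events_XVZ_def intro!: bexI[of _ 2])
    qed
  qed (auto simp: I_def events_XVZ_def)
  then show ?thesis
    by (simp only: distr_V_Z)
qed

lemma nn_integral_X_V_Y:
  assumes [measurable]: "H \<in> borel_measurable (borel \<Otimes>\<^sub>M (borel \<Otimes>\<^sub>M borel))"
  shows "(\<integral>\<^sup>+\<omega>. H (X \<omega>, V \<omega>, Y \<omega>) \<partial>M)
    = (\<integral>\<^sup>+x. \<integral>\<^sup>+v. \<integral>\<^sup>+y. H (x, v, y) * gauss_density v (y - x) \<partial>lborel \<partial>P\<^sub>V \<partial>P\<^sub>X)"
proof -
  interpret VZ: prob_space "P\<^sub>V \<Otimes>\<^sub>M P\<^sub>Z"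
    by (intro prob_space_pair P\<^sub>V.prob_space_axioms P\<^sub>Z.prob_space_axioms)
  let ?H = "\<lambda>(x, v, z). H (x, v, x + sqrt v *\<^sub>R z)"
  have "(\<integral>\<^sup>+\<omega>. H (X \<omega>, V \<omega>, Y \<omega>) \<partial>M)
      = (\<integral>\<^sup>+w. ?H w \<partial>distr M (borel \<Otimes>\<^sub>M (borel \<Otimes>\<^sub>M borel)) (\<lambda>\<omega>. (X \<omega>, V \<omega>, Z \<omega>)))"
    by (simp add: nn_integral_distr)
  also have "\<dots> = (\<integral>\<^sup>+x. \<integral>\<^sup>+w. ?H (x, w) \<partial>(P\<^sub>V \<Otimes>\<^sub>M P\<^sub>Z) \<partial>P\<^sub>X)"
    unfolding distr_X_VZ by (rule VZ.nn_integral_fst[symmetric]) measurable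
  also have "\<dots> = (\<integral>\<^sup>+x. \<integral>\<^sup>+v. \<integral>\<^sup>+z. H (x, v, x + sqrt v *\<^sub>R z) \<partial>P\<^sub>Z \<partial>P\<^sub>V \<partial>P\<^sub>X)"
  proof (intro nn_integral_cong)
    fix x :: "real^'p"
    have "(\<lambda>(v, z). H (x, v, x + sqrt v *\<^sub>R z)) \<in> borel_measurable (P\<^sub>V \<Otimes>\<^sub>M P\<^sub>Z)"
      by measurable
    from P\<^sub>Z.nn_integral_fst[OF this] show "(\<integral>\<^sup>+w. ?H (x, w) \<partial>(P\<^sub>V \<Otimes>\<^sub>M P\<^sub>Z))
        = (\<integral>\<^sup>+v. \<integral>\<^sup>+z. H (x, v, x + sqrt v *\<^sub>R z) \<partial>P\<^sub>Z \<partial>P\<^sub>V)"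
      by simp
  qed
  also have "\<dots> = (\<integral>\<^sup>+x. \<integral>\<^sup>+v. \<integral>\<^sup>+y. H (x, v, y) * gauss_density v (y - x) \<partial>lborel \<partial>P\<^sub>V \<partial>P\<^sub>X)"
  proof (rule nn_integral_cong, rule nn_integral_cong_AE)
    fix x :: "real^'p"
    show "AE v in P\<^sub>V. (\<integral>\<^sup>+z. H (x, v, x + sqrt v *\<^sub>R z) \<partial>P\<^sub>Z)
        = (\<integral>\<^sup>+y. H (x, v, y) * gauss_density v (y - x) \<partial>lborel)"
      using AE_P_V_pos
    proof eventually_elim
      case (elim v)
      show ?case
        unfolding P_Z_eq by (intro nn_integral_std_gauss_affine elim) measurable
    qed
  qed
  finally show ?thesis .
qed

lemma distr_X_YV:
  "distr M (borel \<Otimes>\<^sub>M (borel \<Otimes>\<^sub>M borel)) (\<lambda>\<omega>. (X \<omega>, Y \<omega>, V \<omega>))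
    = density (P\<^sub>X \<Otimes>\<^sub>M (lborel \<Otimes>\<^sub>M P\<^sub>V)) (\<lambda>(x, y, v). gauss_density v (y - x))"
proof (rule distr_eq_density_pair_measureI)
  interpret pair_sigma_finite lborel P\<^sub>V ..
  show "sigma_finite_measure (lborel \<Otimes>\<^sub>M P\<^sub>V)"
    by (rule sigma_finite_lborel_P_V)
  fix D :: "((real^'p) \<times> (real^'p) \<times> real) set"
  assume [measurable]: "D \<in> sets (borel \<Otimes>\<^sub>M (borel \<Otimes>\<^sub>M borel))"
  have "(\<integral>\<^sup>+\<omega>. indicator D (X \<omega>, Y \<omega>, V \<omega>) \<partial>M)
      = (\<integral>\<^sup>+x. \<integral>\<^sup>+v. \<integral>\<^sup>+y. indicator D (x, y, v) * gauss_density v (y - x) \<partial>lborel \<partial>P\<^sub>V \<partial>P\<^sub>X)"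
    by (rule nn_integral_X_V_Y[where H="\<lambda>(x, v, y). indicator D (x, y, v)", simplified]) measurable
  also have "\<dots> = (\<integral>\<^sup>+x. \<integral>\<^sup>+y. \<integral>\<^sup>+v. indicator D (x, y, v) * gauss_density v (y - x) \<partial>P\<^sub>V \<partial>lborel \<partial>P\<^sub>X)"
    by (intro nn_integral_cong Fubini') measurable
  also have "\<dots> = (\<integral>\<^sup>+x. \<integral>\<^sup>+w. (\<lambda>(x, y, v). gauss_density v (y - x)) (x, w) * indicator D (x, w)
      \<partial>(lborel \<Otimes>\<^sub>M P\<^sub>V) \<partial>P\<^sub>X)"
    by (intro nn_integral_cong, subst P\<^sub>V.nn_integral_fst[symmetric]) (auto simp: mult.commute)
  finally show "(\<integral>\<^sup>+\<omega>. indicator D (X \<omega>, Y \<omega>, V \<omega>) \<partial>M) = \<dots>" .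
qed measurable

lemma distr_X_Y:
  "distr M (borel \<Otimes>\<^sub>M borel) (\<lambda>\<omega>. (X \<omega>, Y \<omega>))
    = density (P\<^sub>X \<Otimes>\<^sub>M lborel) (\<lambda>(x, y). noise_density (y - x))"
proof (rule distr_eq_density_pair_measureI)
  interpret pair_sigma_finite lborel P\<^sub>V ..
  show "sigma_finite_measure (lborel :: (real^'p) measure)" ..
  fix D :: "((real^'p) \<times> (real^'p)) set"
  assume [measurable]: "D \<in> sets (borel \<Otimes>\<^sub>M borel)"
  have "(\<integral>\<^sup>+\<omega>. indicator D (X \<omega>, Y \<omega>) \<partial>M)
      = (\<integral>\<^sup>+x. \<integral>\<^sup>+v. \<integral>\<^sup>+y. indicator D (x, y) * gauss_density v (y - x) \<partial>lborel \<partial>P\<^sub>V \<partial>P\<^sub>X)"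
    by (rule nn_integral_X_V_Y[where H="\<lambda>(x, v, y). indicator D (x, y)", simplified]) measurable
  also have "\<dots> = (\<integral>\<^sup>+x. \<integral>\<^sup>+y. \<integral>\<^sup>+v. indicator D (x, y) * gauss_density v (y - x) \<partial>P\<^sub>V \<partial>lborel \<partial>P\<^sub>X)"
    by (intro nn_integral_cong Fubini') measurable
  also have "\<dots> = (\<integral>\<^sup>+x. \<integral>\<^sup>+y. noise_density (y - x) * indicator D (x, y) \<partial>lborel \<partial>P\<^sub>X)"
    by (simp add: noise_density_def nn_integral_cmult mult.commute)
  finally show "(\<integral>\<^sup>+\<omega>. indicator D (X \<omega>, Y \<omega>) \<partial>M)
      = (\<integral>\<^sup>+x. \<integral>\<^sup>+y. (\<lambda>(x, y). noise_density (y - x)) (x, y) * indicator D (x, y) \<partial>lborel \<partial>P\<^sub>X)"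
    by simp
qed measurable

lemma distr_V_N:
  "distr M (borel \<Otimes>\<^sub>M borel) (\<lambda>\<omega>. (V \<omega>, N \<omega>)) = density (P\<^sub>V \<Otimes>\<^sub>M lborel) (\<lambda>(v, n). gauss_density v n)"
proof (rule distr_eq_density_pair_measureI)
  show "sigma_finite_measure (lborel :: (real^'p) measure)" ..
  fix D :: "(real \<times> (real^'p)) set"
  assume [measurable]: "D \<in> sets (borel \<Otimes>\<^sub>M borel)"
  have "(\<integral>\<^sup>+\<omega>. indicator D (V \<omega>, N \<omega>) \<partial>M)
      = (\<integral>\<^sup>+w. indicator D (fst w, sqrt (fst w) *\<^sub>R snd w) \<partial>distr M (borel \<Otimes>\<^sub>M borel) (\<lambda>\<omega>. (V \<omega>, Z \<omega>)))"
    by (simp add: nn_integral_distr)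
  also have "\<dots> = (\<integral>\<^sup>+v. \<integral>\<^sup>+z. indicator D (v, sqrt v *\<^sub>R z) \<partial>P\<^sub>Z \<partial>P\<^sub>V)"
    unfolding distr_V_Z by (subst P\<^sub>Z.nn_integral_fst[symmetric]) simp_all
  also have "\<dots> = (\<integral>\<^sup>+v. \<integral>\<^sup>+n. gauss_density v n * indicator D (v, n) \<partial>lborel \<partial>P\<^sub>V)"
  proof (rule nn_integral_cong_AE)
    show "AE v in P\<^sub>V. (\<integral>\<^sup>+z. indicator D (v, sqrt v *\<^sub>R z) \<partial>P\<^sub>Z)
        = (\<integral>\<^sup>+n. gauss_density v n * indicator D (v, n) \<partial>lborel)"
      using AE_P_V_pos
    proof eventually_elim
      case (elim v)
      have "(\<integral>\<^sup>+z. indicator D (v, 0 + sqrt v *\<^sub>R z) \<partial>P\<^sub>Z)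
          = (\<integral>\<^sup>+n. indicator D (v, n) * gauss_density v (n - 0) \<partial>lborel)"
        unfolding P_Z_eq by (intro nn_integral_std_gauss_affine elim) measurable
      then show ?case
        by (simp add: mult.commute)
    qed
  qed
  finally show "(\<integral>\<^sup>+\<omega>. indicator D (V \<omega>, N \<omega>) \<partial>M)
      = (\<integral>\<^sup>+v. \<integral>\<^sup>+n. (\<lambda>(v, n). gauss_density v n) (v, n) * indicator D (v, n) \<partial>lborel \<partial>P\<^sub>V)"
    by simp
qed measurable

lemma distr_Y: "distr M borel Y = density lborel output_density"
proof -
  have "distr M borel Y = distr (distr M (borel \<Otimes>\<^sub>M borel) (\<lambda>\<omega>. (X \<omega>, Y \<omega>))) lborel snd"
    by (subst distr_distr) (simp_all add: comp_def cong: distr_cong)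
  also have "\<dots> = density lborel (\<lambda>y. \<integral>\<^sup>+x. (\<lambda>(x, y). noise_density (y - x)) (x, y) \<partial>P\<^sub>X)"
    unfolding distr_X_Y by (rule distr_density_pair_snd) (unfold_locales, measurable)
  finally show ?thesis
    by (simp add: output_density_def[abs_def])
qed

lemma distr_N: "distr M borel N = density lborel noise_density"
proof -
  have "distr M borel N = distr (distr M (borel \<Otimes>\<^sub>M borel) (\<lambda>\<omega>. (V \<omega>, N \<omega>))) lborel snd"
    by (subst distr_distr) (simp_all add: comp_def cong: distr_cong)
  also have "\<dots> = density lborel (\<lambda>n. \<integral>\<^sup>+v. (\<lambda>(v, n). gauss_density v n) (v, n) \<partial>P\<^sub>V)"
    unfolding distr_V_N by (rule distr_density_pair_snd) (unfold_locales, measurable)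
  finally show ?thesis
    by (simp add: noise_density_def[abs_def])
qed

lemma distr_Y_V:
  "distr M (borel \<Otimes>\<^sub>M borel) (\<lambda>\<omega>. (Y \<omega>, V \<omega>))
    = density (lborel \<Otimes>\<^sub>M P\<^sub>V) (\<lambda>(y, v). cond_output_density v y)"
proof -
  interpret pair_sigma_finite lborel P\<^sub>V ..
  have "distr M (borel \<Otimes>\<^sub>M borel) (\<lambda>\<omega>. (Y \<omega>, V \<omega>))
      = distr (distr M (borel \<Otimes>\<^sub>M (borel \<Otimes>\<^sub>M borel)) (\<lambda>\<omega>. (X \<omega>, Y \<omega>, V \<omega>))) (lborel \<Otimes>\<^sub>M P\<^sub>V) snd"
    by (subst distr_distr) (simp_all add: comp_def cong: distr_cong sets_pair_measure_cong)
  also have "\<dots> = density (lborel \<Otimes>\<^sub>M P\<^sub>V)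
      (\<lambda>w. \<integral>\<^sup>+x. (\<lambda>(x, y, v). gauss_density v (y - x)) (x, w) \<partial>P\<^sub>X)"
    unfolding distr_X_YV by (rule distr_density_pair_snd) (unfold_locales, measurable)
  finally show ?thesis
    by (simp add: cond_output_density_def split_beta')
qed

lemma noise_density_pos: "0 < noise_density n"
  unfolding noise_density_def using AE_P_V_pos
  by (intro P\<^sub>V.nn_integral_pos) (auto elim: eventually_mono simp: gauss_density_pos)

lemma output_density_pos: "0 < output_density y"
  unfolding output_density_def by (intro P\<^sub>X.nn_integral_pos) (simp_all add: noise_density_pos)

lemma cond_output_density_pos: "0 < v \<Longrightarrow> 0 < cond_output_density v y"
  unfolding cond_output_density_def by (intro P\<^sub>X.nn_integral_pos) (simp_all add: gauss_density_pos)

lemma cond_output_density_less_top: "0 < v \<Longrightarrow> cond_output_density v y < \<top>"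
proof -
  assume v: "0 < v"
  have "cond_output_density v y \<le> (\<integral>\<^sup>+x. ennreal ((2 * pi * v) powr (- real CARD('p) / 2)) \<partial>P\<^sub>X)"
    unfolding cond_output_density_def using v by (intro nn_integral_mono gauss_density_le)
  also have "\<dots> < \<top>"
    using P\<^sub>X.emeasure_space_1 by simp
  finally show ?thesis .
qed

lemma nn_integral_cond_output_density: "(\<integral>\<^sup>+v. cond_output_density v y \<partial>P\<^sub>V) = output_density y"
proof -
  interpret pair_sigma_finite P\<^sub>X P\<^sub>V ..
  show ?thesis
    unfolding cond_output_density_def output_density_def noise_density_def
    by (rule Fubini') measurable
qed

lemma X_Y_densities:
  "joint_product_densities M borel borel X Y (P\<^sub>X \<Otimes>\<^sub>M lborel)
    (\<lambda>(x, y). noise_density (y - x)) (\<lambda>(x, y). output_density y)"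
proof
  have "sigma_finite_measure (density lborel output_density)"
    unfolding distr_Y[symmetric] by (intro prob_space_imp_sigma_finite prob_space_distr) simp
  with lborel.sigma_finite_measure_axioms
  show "P\<^sub>X \<Otimes>\<^sub>M distr M borel Y = density (P\<^sub>X \<Otimes>\<^sub>M lborel) (\<lambda>(x, y). output_density y)"
    unfolding distr_Y by (rule pair_measure_density_right) measurable
qed (simp_all add: distr_X_Y output_density_pos cong: sets_pair_measure_cong)

lemma X_YV_densities:
  "joint_product_densities M borel (borel \<Otimes>\<^sub>M borel) X (\<lambda>\<omega>. (Y \<omega>, V \<omega>)) (P\<^sub>X \<Otimes>\<^sub>M (lborel \<Otimes>\<^sub>M P\<^sub>V))
    (\<lambda>(x, y, v). gauss_density v (y - x)) (\<lambda>(x, y, v). cond_output_density v y)"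
proof
  note sigma_finite_lborel_P_V
  moreover have "sigma_finite_measure (density (lborel \<Otimes>\<^sub>M P\<^sub>V) (\<lambda>(y, v). cond_output_density v y))"
    unfolding distr_Y_V[symmetric] by (intro prob_space_imp_sigma_finite prob_space_distr) simp
  ultimately show "P\<^sub>X \<Otimes>\<^sub>M distr M (borel \<Otimes>\<^sub>M borel) (\<lambda>\<omega>. (Y \<omega>, V \<omega>))
      = density (P\<^sub>X \<Otimes>\<^sub>M (lborel \<Otimes>\<^sub>M P\<^sub>V)) (\<lambda>(x, y, v). cond_output_density v y)"
    unfolding distr_Y_V by (rule pair_measure_density_right) measurable
qed (simp_all add: distr_X_YV V_pos cond_output_density_pos cong: sets_pair_measure_cong)

lemma V_N_densities:
  "joint_product_densities M borel borel V N (P\<^sub>V \<Otimes>\<^sub>M lborel)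
    (\<lambda>(v, n). gauss_density v n) (\<lambda>(v, n). noise_density n)"
proof
  have "sigma_finite_measure (density lborel noise_density)"
    unfolding distr_N[symmetric] by (intro prob_space_imp_sigma_finite prob_space_distr) simp
  with lborel.sigma_finite_measure_axioms
  show "P\<^sub>V \<Otimes>\<^sub>M distr M borel N = density (P\<^sub>V \<Otimes>\<^sub>M lborel) (\<lambda>(v, n). noise_density n)"
    unfolding distr_N by (rule pair_measure_density_right) measurable
qed (simp_all add: distr_V_N noise_density_pos cong: sets_pair_measure_cong)

lemma Y_V_densities:
  "joint_product_densities M borel borel Y V (lborel \<Otimes>\<^sub>M P\<^sub>V)
    (\<lambda>(y, v). cond_output_density v y) (\<lambda>(y, v). output_density y)"
proof
  show "distr M borel Y \<Otimes>\<^sub>M P\<^sub>V = density (lborel \<Otimes>\<^sub>M P\<^sub>V) (\<lambda>(y, v). output_density y)"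
    unfolding distr_Y by (rule pair_measure_density_left) (unfold_locales, measurable)
qed (simp_all add: distr_Y_V output_density_pos cong: sets_pair_measure_cong)

lemma X_V_densities: "joint_product_densities M borel borel X V (P\<^sub>X \<Otimes>\<^sub>M P\<^sub>V) (\<lambda>_. 1) (\<lambda>_. 1)"
  by unfold_locales (simp_all add: distr_X_V density_1 cong: sets_pair_measure_cong)

abbreviation "info_X_Y \<equiv> joint_product_densities.information_density X Y
  (\<lambda>(x, y). noise_density (y - x)) (\<lambda>(x, y). output_density y)"

abbreviation "info_X_YV \<equiv> joint_product_densities.information_density X (\<lambda>\<omega>. (Y \<omega>, V \<omega>))
  (\<lambda>(x, y, v). gauss_density v (y - x)) (\<lambda>(x, y, v). cond_output_density v y)"

abbreviation "info_V_N \<equiv> joint_product_densities.information_density V N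
  (\<lambda>(v, n). gauss_density v n) (\<lambda>(v, n). noise_density n)"

abbreviation "info_V_Y \<equiv> joint_product_densities.information_density Y V
  (\<lambda>(y, v). cond_output_density v y) (\<lambda>(y, v). output_density y)"

lemmas info_defs =
  joint_product_densities.information_density_def[OF X_Y_densities]
  joint_product_densities.information_density_def[OF X_YV_densities]
  joint_product_densities.information_density_def[OF V_N_densities]
  joint_product_densities.information_density_def[OF Y_V_densities]

lemmas info_measurable [measurable] =
  joint_product_densities.information_density_measurable[OF X_Y_densities]
  joint_product_densities.information_density_measurable[OF X_YV_densities]
  joint_product_densities.information_density_measurable[OF V_N_densities]

lemmas MI_X_Y = joint_product_densities.MI_eq_ereal_integral[OF X_Y_densities]
lemmas MI_X_YV = joint_product_densities.MI_eq_ereal_integral[OF X_YV_densities]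
lemmas MI_V_N = joint_product_densities.MI_eq_ereal_integral[OF V_N_densities]

lemma MI_X_V: "MI M borel borel X V = 0"
proof -
  have "joint_product_densities.information_density X V (\<lambda>_. 1) (\<lambda>_. 1) = (\<lambda>_. 0)"
    by (simp add: joint_product_densities.information_density_def[OF X_V_densities] fun_eq_iff)
  then show ?thesis
    using joint_product_densities.MI_eq_ereal_integral[OF X_V_densities]
    by (simp add: ereal_integral_def)
qed

lemma AE_densities_finite: "AE \<omega> in M. 0 < V \<omega> \<and> noise_density (N \<omega>) < \<top> \<and> output_density (Y \<omega>) < \<top>"
proof -
  have "AE \<omega> in M. noise_density (N \<omega>) < \<top>" "AE \<omega> in M. output_density (Y \<omega>) < \<top>"
    using distr_N distr_Y by (intro AE_less_top_of_distr_eq_density; simp)+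
  moreover have "AE \<omega> in M. 0 < V \<omega>"
    using V_pos by auto
  ultimately show ?thesis
    by eventually_elim simp
qed

lemma information_density_chain_rule:
  "AE \<omega> in M. info_X_YV \<omega> = info_X_Y \<omega> + info_V_N \<omega> - info_V_Y \<omega>"
  using AE_densities_finite
  by eventually_elim
    (simp add: info_defs ln_enn2real_divide gauss_density_pos
      gauss_density_less_top cond_output_density_pos cond_output_density_less_top noise_density_pos
      output_density_pos)

lemma nn_integral_noise_density_shift: "(\<integral>\<^sup>+x. \<integral>\<^sup>+y. noise_density (y - x) \<partial>lborel \<partial>P\<^sub>X) = 1"
proof -
  let ?f = "\<lambda>(x, y). noise_density (y - x)"
  have m: "?f \<in> borel_measurable (P\<^sub>X \<Otimes>\<^sub>M lborel)"
    by measurable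
  have "prob_space (density (P\<^sub>X \<Otimes>\<^sub>M lborel) ?f)"
    unfolding distr_X_Y[symmetric] by (rule prob_space_distr) simp
  then have "emeasure (density (P\<^sub>X \<Otimes>\<^sub>M lborel) ?f) (space (P\<^sub>X \<Otimes>\<^sub>M lborel)) = 1"
    using prob_space.emeasure_space_1 by fastforce
  then show ?thesis
    unfolding emeasure_density[OF m sets.top] using lborel.nn_integral_fst[OF m]
    by (simp add: space_pair_measure)
qed

lemma exp_info_X_Y_minus_info_X_YV:
  "AE \<omega> in M. ennreal (exp (info_X_Y \<omega> - info_X_YV \<omega>))
    = noise_density (N \<omega>) / output_density (Y \<omega>)
      * (cond_output_density (V \<omega>) (Y \<omega>) / gauss_density (V \<omega>) (N \<omega>))"
  using AE_densities_finite
  by eventually_elim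
    (simp add: info_defs ennreal_exp_diff_ln_divide gauss_density_pos
      gauss_density_less_top cond_output_density_pos cond_output_density_less_top noise_density_pos
      output_density_pos)

lemma nn_integral_exp_info_X_Y_minus_info_X_YV:
  "(\<integral>\<^sup>+\<omega>. ennreal (exp (info_X_Y \<omega> - info_X_YV \<omega>)) \<partial>M) \<le> 1"
proof -
  define h where "h = (\<lambda>(x, y, v). noise_density (y - x) / output_density y
    * (cond_output_density v y / gauss_density v (y - x)))"
  have [measurable]: "h \<in> borel_measurable (borel \<Otimes>\<^sub>M (borel \<Otimes>\<^sub>M borel))"
    unfolding h_def by measurable
  have "(\<integral>\<^sup>+\<omega>. ennreal (exp (info_X_Y \<omega> - info_X_YV \<omega>)) \<partial>M) = (\<integral>\<^sup>+\<omega>. h (X \<omega>, Y \<omega>, V \<omega>) \<partial>M)"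
    using exp_info_X_Y_minus_info_X_YV by (intro nn_integral_cong_AE) (simp add: h_def)
  also have "\<dots> = (\<integral>\<^sup>+w. h w \<partial>distr M (borel \<Otimes>\<^sub>M (borel \<Otimes>\<^sub>M borel)) (\<lambda>\<omega>. (X \<omega>, Y \<omega>, V \<omega>)))"
    by (rule nn_integral_distr[symmetric]) measurable
  also have "\<dots> = (\<integral>\<^sup>+w. (\<lambda>(x, y, v). gauss_density v (y - x)) w * h w \<partial>(P\<^sub>X \<Otimes>\<^sub>M (lborel \<Otimes>\<^sub>M P\<^sub>V)))"
    unfolding distr_X_YV by (rule nn_integral_density) measurable
  also have "\<dots> \<le> (\<integral>\<^sup>+w. (\<lambda>(x, y, v). noise_density (y - x) / output_density y
      * cond_output_density v y) w \<partial>(P\<^sub>X \<Otimes>\<^sub>M (lborel \<Otimes>\<^sub>M P\<^sub>V)))"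
    by (intro nn_integral_mono)
      (auto simp: h_def mult.left_commute[of "gauss_density _ _"]
        intro!: mult_left_mono ennreal_mult_divide_le)
  also have "\<dots> = (\<integral>\<^sup>+x. \<integral>\<^sup>+w. (\<lambda>(x, y, v). noise_density (y - x) / output_density y
      * cond_output_density v y) (x, w) \<partial>(lborel \<Otimes>\<^sub>M P\<^sub>V) \<partial>P\<^sub>X)"
    by (rule sigma_finite_measure.nn_integral_fst[OF sigma_finite_lborel_P_V, symmetric]) measurable
  also have "\<dots> = (\<integral>\<^sup>+x. \<integral>\<^sup>+y. \<integral>\<^sup>+v. noise_density (y - x) / output_density y
      * cond_output_density v y \<partial>P\<^sub>V \<partial>lborel \<partial>P\<^sub>X)"
    by (intro nn_integral_cong, subst P\<^sub>V.nn_integral_fst[symmetric]) auto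
  also have "\<dots> = (\<integral>\<^sup>+x. \<integral>\<^sup>+y. noise_density (y - x) / output_density y * output_density y \<partial>lborel \<partial>P\<^sub>X)"
    by (simp add: nn_integral_cmult nn_integral_cond_output_density)
  also have "\<dots> \<le> (\<integral>\<^sup>+x. \<integral>\<^sup>+y. noise_density (y - x) \<partial>lborel \<partial>P\<^sub>X)"
    by (intro nn_integral_mono) (simp add: mult.commute[of _ "output_density _"] ennreal_mult_divide_le)
  finally show ?thesis
    by (simp add: nn_integral_noise_density_shift)
qed

theorem MI_le_CMI: "MI M borel borel X Y \<le> CMI M borel borel borel X Y V"
proof -
  have "ereal_integral M info_X_Y \<le> ereal_integral M info_X_YV"
    using nn_integral_exp_info_X_Y_minus_info_X_YV
      joint_product_densities.nn_integral_exp_neg_information_density[OF X_Y_densities]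
    by (intro ereal_integral_mono_exp) measurable
  then show ?thesis
    by (simp add: CMI_def MI_X_V MI_X_Y MI_X_YV)
qed

theorem CMI_le_MI_add_MI:
  "CMI M borel borel borel X Y V \<le> MI M borel borel X Y + MI M borel borel V N"
proof -
  have "(\<integral>\<^sup>+\<omega>. ennreal (exp (info_X_YV \<omega> - (info_X_Y \<omega> + info_V_N \<omega>))) \<partial>M)
      = (\<integral>\<^sup>+\<omega>. ennreal (exp (- info_V_Y \<omega>)) \<partial>M)"
    using information_density_chain_rule by (intro nn_integral_cong_AE) auto
  also have "\<dots> \<le> 1"
    by (rule joint_product_densities.nn_integral_exp_neg_information_density[OF Y_V_densities])
  finally have "ereal_integral M info_X_YV \<le> ereal_integral M (\<lambda>\<omega>. info_X_Y \<omega> + info_V_N \<omega>)"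
    using joint_product_densities.nn_integral_exp_neg_information_density[OF X_YV_densities]
    by (intro ereal_integral_mono_exp) measurable
  also have "\<dots> \<le> ereal_integral M info_X_Y + ereal_integral M info_V_N"
    by (rule ereal_integral_add_le)
  finally show ?thesis
    by (simp add: CMI_def MI_X_V MI_X_Y MI_X_YV MI_V_N)
qed

end

theorem lemma5:
  fixes M :: "'a measure"
    and X Z :: "'a \<Rightarrow> real^'p"
    and V :: "'a \<Rightarrow> real"
  assumes "prob_space M"
    and "X \<in> measurable M borel"
    and "V \<in> borel_measurable M"
    and "\<forall>\<omega>\<in>space M. V \<omega> > 0"
    and "distributed M lborel Z std_gauss_density"
    and "indep3 M borel X borel V borel Z"
  shows "let N = (\<lambda>\<omega>. sqrt (V \<omega>) *\<^sub>R Z \<omega>);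
             Y = (\<lambda>\<omega>. X \<omega> + N \<omega>)
         in MI M borel borel X Y \<le> CMI M borel borel borel X Y V
          \<and> CMI M borel borel borel X Y V \<le> MI M borel borel X Y + MI M borel borel V N"
proof -
  interpret scale_mixture_channel M X Z V
    using assms by (simp add: scale_mixture_channel_def scale_mixture_channel_axioms_def)
  show ?thesis
    using MI_le_CMI CMI_le_MI_add_MI by (simp add: Let_def)
qed

end
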